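(* The systems ${\bf Km}$ and ${\bf Km}_\circ$ coincide: for every $\Gamma\cup\{\alpha\}\subseteq For$, $\Gamma\vdash_{\bf Km}\alpha$ iff $\Gamma\vdash_{{\bf Km}_\circ}\alpha$.
   Context: Formulas are built from a denumerable set of propositional variables by the unary connectives $\neg$, $\Box$ and the binary connective $\to$; $For$ is the set of all formulas. Abbreviations: $\Diamond\alpha:=\neg\Box\neg\alpha$, $\alpha\vee\beta:=\neg\alpha\to\beta$, $\alpha\wedge\beta:=\neg(\alpha\to\neg\beta)$, $\circ\alpha:=\Box\alpha\to\Diamond\alpha$, $\bullet\alpha:=\neg\circ\alpha$. All Hilbert calculi below have as axioms all instances (over $For$) of the axiom schemas of a standard Hilbert calculus for classical propositional logic in the signature $\{\neg,\to\}$, plus the listed modal schemas, with modus ponens as the only rule; $\Gamma\vdash_{\bf L}\alpha$ means there is a derivation of $\alpha$ from $\Gamma$ in ${\bf L}$. Common schemas: (M1) $\neg\Diamond\alpha\to\Box(\alpha\to\beta)$; (M2) $\Box\beta\to\Box(\alpha\to\beta)$; (DN1) $\Box\alpha\to\Box\neg\neg\alpha$; (DN2) $\Box\neg\neg\alpha\to\Box\alpha$. ${\bf Km}$: (M1), (M2), (DN1), (DN2) and (K') $\Diamond\alpha\to(\Box(\alpha\to\beta)\to(\Box\alpha\to\Box\beta))$; (K1') $\Diamond\neg\beta\to(\Box(\alpha\to\beta)\to(\Diamond\alpha\to\Diamond\beta))$; (K2') $\Diamond\alpha\to(\Diamond(\alpha\to\beta)\to(\Box\alpha\to\Diamond\beta))$;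 (M3') $(\Diamond\alpha\vee\Diamond\neg\alpha)\to(\Diamond\beta\to\Diamond(\alpha\to\beta))$; (M4') $\Diamond\neg\beta\to(\Diamond\neg\alpha\to\Diamond(\alpha\to\beta))$; (I1) $(\Box\alpha\wedge\Box\neg\alpha)\to(\Box(\alpha\to\beta)\wedge\Box\neg(\alpha\to\beta))$; (I2) $(\Box\beta\wedge\Box\neg\beta)\to(\Box(\alpha\to\beta)\wedge\Box\neg(\alpha\to\beta))$. ${\bf Km}_\circ$: (M1), (M2), (DN1), (DN2) and (K'') $\circ\alpha\to(\Box(\alpha\to\beta)\to(\Box\alpha\to\Box\beta))$; (K1'') $\circ\beta\to(\Box(\alpha\to\beta)\to(\Diamond\alpha\to\Diamond\beta))$; (K2'') $\circ\alpha\to(\Diamond(\alpha\to\beta)\to(\Box\alpha\to\Diamond\beta))$; (M3'') $\circ\alpha\to(\Diamond\beta\to\Diamond(\alpha\to\beta))$; (M4'') $\circ\beta\to(\Diamond\neg\alpha\to\Diamond(\alpha\to\beta))$; (I1') $\bullet\alpha\to\bullet(\alpha\to\beta)$; (I2') $\bullet\beta\to\bullet(\alpha\to\beta)$. *)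

theory Defs
  imports Main
begin

datatype fm = Var nat | Neg fm | Box fm | Imp fm fm

definition Dia :: "fm \<Rightarrow> fm" where "Dia a = Neg (Box (Neg a))"
definition Or :: "fm \<Rightarrow> fm \<Rightarrow> fm" where "Or a b = Imp (Neg a) b"
definition And :: "fm \<Rightarrow> fm \<Rightarrow> fm" where "And a b = Neg (Imp a (Neg b))"
definition Cons :: "fm \<Rightarrow> fm" where "Cons a = Imp (Box a) (Dia a)"
definition Incons :: "fm \<Rightarrow> fm" where "Incons a = Neg (Cons a)"

inductive CPL_ax :: "fm \<Rightarrow> bool" where
  A1: "CPL_ax (Imp a (Imp b a))"
| A2: "CPL_ax (Imp (Imp a (Imp b c)) (Imp (Imp a b) (Imp a c)))"
| A3: "CPL_ax (Imp (Imp (Neg b) (Neg a)) (Imp (Imp (Neg b) a) b))"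

inductive common_ax :: "fm \<Rightarrow> bool" where
  M1: "common_ax (Imp (Neg (Dia a)) (Box (Imp a b)))"
| M2: "common_ax (Imp (Box b) (Box (Imp a b)))"
| DN1: "common_ax (Imp (Box a) (Box (Neg (Neg a))))"
| DN2: "common_ax (Imp (Box (Neg (Neg a))) (Box a))"

inductive Km_ax :: "fm \<Rightarrow> bool" where
  K': "Km_ax (Imp (Dia a) (Imp (Box (Imp a b)) (Imp (Box a) (Box b))))"
| K1': "Km_ax (Imp (Dia (Neg b)) (Imp (Box (Imp a b)) (Imp (Dia a) (Dia b))))"
| K2': "Km_ax (Imp (Dia a) (Imp (Dia (Imp a b)) (Imp (Box a) (Dia b))))"
| M3': "Km_ax (Imp (Or (Dia a) (Dia (Neg a))) (Imp (Dia b) (Dia (Imp a b))))"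
| M4': "Km_ax (Imp (Dia (Neg b)) (Imp (Dia (Neg a)) (Dia (Imp a b))))"
| I1: "Km_ax (Imp (And (Box a) (Box (Neg a))) (And (Box (Imp a b)) (Box (Neg (Imp a b)))))"
| I2: "Km_ax (Imp (And (Box b) (Box (Neg b))) (And (Box (Imp a b)) (Box (Neg (Imp a b)))))"

inductive Kmc_ax :: "fm \<Rightarrow> bool" where
  K'': "Kmc_ax (Imp (Cons a) (Imp (Box (Imp a b)) (Imp (Box a) (Box b))))"
| K1'': "Kmc_ax (Imp (Cons b) (Imp (Box (Imp a b)) (Imp (Dia a) (Dia b))))"
| K2'': "Kmc_ax (Imp (Cons a) (Imp (Dia (Imp a b)) (Imp (Box a) (Dia b))))"
| M3'': "Kmc_ax (Imp (Cons a) (Imp (Dia b) (Dia (Imp a b))))"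
| M4'': "Kmc_ax (Imp (Cons b) (Imp (Dia (Neg a)) (Dia (Imp a b))))"
| I1': "Kmc_ax (Imp (Incons a) (Incons (Imp a b)))"
| I2': "Kmc_ax (Imp (Incons b) (Incons (Imp a b)))"

inductive derivable :: "(fm \<Rightarrow> bool) \<Rightarrow> fm set \<Rightarrow> fm \<Rightarrow> bool" for Ax where
  ax: "Ax a \<Longrightarrow> derivable Ax G a"
| hyp: "a \<in> G \<Longrightarrow> derivable Ax G a"
| mp: "derivable Ax G (Imp a b) \<Longrightarrow> derivable Ax G a \<Longrightarrow> derivable Ax G b"

definition Km_derives :: "fm set \<Rightarrow> fm \<Rightarrow> bool" where
  "Km_derives G a = derivable (\<lambda>f. CPL_ax f \<or> common_ax f \<or> Km_ax f) G a"

definition Kmc_derives :: "fm set \<Rightarrow> fm \<Rightarrow> bool" where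
  "Kmc_derives G a = derivable (\<lambda>f. CPL_ax f \<or> common_ax f \<or> Kmc_ax f) G a"

end

theory Submission
  imports Defs
begin

text \<open>The axioms of the two systems differ only in their guards: \<open>\<Diamond>\<alpha>\<close> in \<open>Km\<close> against
  \<open>\<circ>\<alpha> = \<Box>\<alpha> \<rightarrow> \<Diamond>\<alpha>\<close> in \<open>Km\<^sub>\<circ>\<close>, and \<open>\<Box>\<alpha> \<and> \<Box>\<not>\<alpha>\<close> against \<open>\<bullet>\<alpha>\<close>.  Reading every \<open>\<Box>\<phi>\<close>
  as a propositional atom, \<open>\<bullet>\<alpha>\<close> is literally \<open>\<Box>\<alpha> \<and> \<Box>\<not>\<alpha>\<close> and \<open>\<Diamond>\<alpha>\<close> implies \<open>\<circ>\<alpha>\<close>;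
  conversely, if \<open>\<circ>\<alpha>\<close> holds but \<open>\<Diamond>\<alpha>\<close> fails, then \<open>\<not>\<Box>\<alpha>\<close>, and the axiom at hand holds
  for propositional reasons, possibly with the help of DN1/DN2 or M3'.  So each axiom of
  one system is a tautological consequence of axioms of the other.  Both systems contain
  classical propositional logic, which proves every tautology, and modus ponens is their
  only rule, so they derive the same formulas from the same premises.\<close>

lemma derivable_mono:
  assumes "derivable A G f" "\<And>x. A x \<Longrightarrow> B x" "G \<subseteq> H"
  shows "derivable B H f"
  using assms(1,3) by induction (auto intro: derivable.intros assms(2))

lemma derivable_derived_axioms:
  assumes "derivable A G f" "\<And>x. A x \<Longrightarrow> derivable B {} x"
  shows "derivable B G f"
  using assms(1) by induction (auto intro: derivable.intros derivable_mono[OF assms(2)])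

lemma derivable_eq_if_axioms_interderivable:
  assumes "\<And>x. A x \<Longrightarrow> derivable B {} x" "\<And>x. B x \<Longrightarrow> derivable A {} x"
  shows "derivable A G f \<longleftrightarrow> derivable B G f"
  using derivable_derived_axioms assms by blast

abbreviation CPL_derivable :: "fm set \<Rightarrow> fm \<Rightarrow> bool" where
  "CPL_derivable \<equiv> derivable CPL_ax"

lemma CPL_A1: "CPL_derivable G (Imp a (Imp b a))"
  by (intro derivable.ax CPL_ax.intros)

lemma CPL_A2: "CPL_derivable G (Imp (Imp a (Imp b c)) (Imp (Imp a b) (Imp a c)))"
  by (intro derivable.ax CPL_ax.intros)

lemma CPL_A3: "CPL_derivable G (Imp (Imp (Neg b) (Neg a)) (Imp (Imp (Neg b) a) b))"
  by (intro derivable.ax CPL_ax.intros)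

lemmas CPL_mp = derivable.mp[of CPL_ax]

lemma CPL_hyp: "CPL_derivable (insert a G) a"
  by (simp add: derivable.hyp)

lemma CPL_imp_refl: "CPL_derivable G (Imp a a)"
  by (rule CPL_mp[OF CPL_mp[OF CPL_A2 CPL_A1] CPL_A1])

lemma CPL_deduction:
  assumes "CPL_derivable (insert a G) b"
  shows "CPL_derivable G (Imp a b)"
  using assms
proof (induction "insert a G" b rule: derivable.induct)
  case (ax x)
  then show ?case by (rule CPL_mp[OF CPL_A1 derivable.ax])
next
  case (hyp x)
  then show ?case by (auto intro: CPL_mp[OF CPL_A1] derivable.hyp CPL_imp_refl)
next
  case (mp x y)
  then show ?case by (blast intro: CPL_mp[OF CPL_mp[OF CPL_A2]])
qed

lemma CPL_undeduction:
  assumes "CPL_derivable G (Imp a b)"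
  shows "CPL_derivable (insert a G) b"
  by (rule CPL_mp[OF derivable_mono[OF assms] CPL_hyp]) auto

lemma CPL_dneg_elim: "CPL_derivable G (Imp (Neg (Neg a)) a)"
  by (rule CPL_deduction[OF CPL_mp[OF CPL_mp[OF CPL_A3 CPL_mp[OF CPL_A1 CPL_hyp]] CPL_imp_refl]])

lemma CPL_dneg_intro: "CPL_derivable G (Imp a (Neg (Neg a)))"
  by (rule CPL_deduction[OF CPL_mp[OF CPL_mp[OF CPL_A3 CPL_dneg_elim] CPL_mp[OF CPL_A1 CPL_hyp]]])

lemma CPL_ex_falso: "CPL_derivable G (Imp (Neg a) (Imp a b))"
proof -
  let ?H = "insert a (insert (Neg a) G)"
  have "CPL_derivable ?H (Neg a)" "CPL_derivable ?H a"
    by (simp_all add: derivable.hyp)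
  then have "CPL_derivable ?H b"
    by (rule CPL_mp[OF CPL_mp[OF CPL_A3 CPL_mp[OF CPL_A1]] CPL_mp[OF CPL_A1]])
  then show ?thesis by (intro CPL_deduction)
qed

lemma CPL_contrapos: "CPL_derivable G (Imp (Imp a b) (Imp (Neg b) (Neg a)))"
proof -
  let ?H = "insert (Neg b) (insert (Imp a b) G)"
  have "CPL_derivable (insert (Neg (Neg a)) ?H) b"
    by (rule CPL_mp[OF _ CPL_mp[OF CPL_dneg_elim CPL_hyp]]) (simp add: derivable.hyp)
  then have "CPL_derivable ?H (Imp (Neg (Neg a)) b)"
    by (rule CPL_deduction)
  then have "CPL_derivable ?H (Neg a)"
    by (rule CPL_mp[OF CPL_mp[OF CPL_A3 CPL_mp[OF CPL_A1]], rotated]) (simp add: derivable.hyp)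
  then show ?thesis by (intro CPL_deduction)
qed

lemma CPL_imp_neg: "CPL_derivable G (Imp a (Imp (Neg b) (Neg (Imp a b))))"
proof -
  have "CPL_derivable (insert (Imp a b) (insert a G)) b"
    by (rule CPL_mp[OF CPL_hyp]) (simp add: derivable.hyp)
  then have "CPL_derivable (insert a G) (Imp (Imp a b) b)"
    by (rule CPL_deduction)
  then have "CPL_derivable (insert a G) (Imp (Neg b) (Neg (Imp a b)))"
    by (rule CPL_mp[OF CPL_contrapos])
  then show ?thesis by (rule CPL_deduction)
qed

lemma CPL_cases: "CPL_derivable G (Imp (Imp a b) (Imp (Imp (Neg a) b) b))"
proof -
  let ?H = "insert (Imp (Neg a) b) (insert (Imp a b) G)"
  have "CPL_derivable ?H (Imp a b)" "CPL_derivable ?H (Imp (Neg a) b)"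
    by (simp_all add: derivable.hyp)
  then have "CPL_derivable ?H (Imp (Neg b) (Neg a))" "CPL_derivable ?H (Imp (Neg b) (Neg (Neg a)))"
    by (simp_all add: CPL_mp[OF CPL_contrapos])
  moreover from this(2) have "CPL_derivable ?H (Imp (Neg b) a)"
    by (rule CPL_deduction[OF CPL_mp[OF CPL_dneg_elim CPL_undeduction]])
  ultimately have "CPL_derivable ?H b"
    by (blast intro: CPL_mp[OF CPL_mp[OF CPL_A3]])
  then show ?thesis by (intro CPL_deduction)
qed

fun prop_atoms :: "fm \<Rightarrow> fm set" where
  "prop_atoms (Var n) = {Var n}"
| "prop_atoms (Box a) = {Box a}"
| "prop_atoms (Neg a) = prop_atoms a"
| "prop_atoms (Imp a b) = prop_atoms a \<union> prop_atoms b"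

fun prop_eval :: "(fm \<Rightarrow> bool) \<Rightarrow> fm \<Rightarrow> bool" where
  "prop_eval v (Var n) = v (Var n)"
| "prop_eval v (Box a) = v (Box a)"
| "prop_eval v (Neg a) = (\<not> prop_eval v a)"
| "prop_eval v (Imp a b) = (prop_eval v a \<longrightarrow> prop_eval v b)"

definition tautology :: "fm \<Rightarrow> bool" where
  "tautology f \<longleftrightarrow> (\<forall>v. prop_eval v f)"

definition literal :: "(fm \<Rightarrow> bool) \<Rightarrow> fm \<Rightarrow> fm" where
  "literal v p = (if v p then p else Neg p)"

lemma finite_prop_atoms: "finite (prop_atoms f)"
  by (induction f) auto

lemma CPL_derivable_literal_eval:
  assumes "literal v ` prop_atoms f \<subseteq> H"
  shows "CPL_derivable H (if prop_eval v f then f else Neg f)"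
  using assms
proof (induction f)
  case (Imp a b)
  have A: "CPL_derivable H (if prop_eval v a then a else Neg a)"
    and B: "CPL_derivable H (if prop_eval v b then b else Neg b)"
    using Imp.prems by (intro Imp.IH; auto)+
  consider "prop_eval v b" | "prop_eval v a" "\<not> prop_eval v b" | "\<not> prop_eval v a"
    by blast
  then show ?case
  proof cases
    case 1
    with B show ?thesis by (simp add: CPL_mp[OF CPL_A1])
  next
    case 2
    with A B show ?thesis by (simp add: CPL_mp[OF CPL_mp[OF CPL_imp_neg]])
  next
    case 3
    with A show ?thesis by (simp add: CPL_mp[OF CPL_ex_falso])
  qed
qed (auto simp: literal_def intro: derivable.hyp CPL_mp[OF CPL_dneg_intro])

text \<open>Kalmar's argument: the literals of the atoms in \<open>S\<close> are discharged one at a time by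
  \<open>CPL_cases\<close>.\<close>

lemma tautology_CPL_derivable_from_literals:
  assumes "tautology f" "finite S" "S \<subseteq> prop_atoms f"
  shows "CPL_derivable (literal v ` (prop_atoms f - S)) f"
  using assms(2,3)
proof (induction S arbitrary: v rule: finite_induct)
  case empty
  have "CPL_derivable (literal v ` prop_atoms f) (if prop_eval v f then f else Neg f)"
    by (rule CPL_derivable_literal_eval) simp
  with assms(1) show ?case by (simp add: tautology_def)
next
  case (insert p S)
  let ?R = "literal v ` (prop_atoms f - insert p S)"
  have IH: "CPL_derivable (literal w ` (prop_atoms f - S)) f" for w
    using insert by simp
  have "literal (v(p := True)) ` (prop_atoms f - S) = insert p ?R"
    and "literal (v(p := False)) ` (prop_atoms f - S) = insert (Neg p) ?R"
    using insert by (auto simp: literal_def)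
  then have "CPL_derivable (insert p ?R) f" "CPL_derivable (insert (Neg p) ?R) f"
    using IH[of "v(p := True)"] IH[of "v(p := False)"] by simp_all
  then show ?case by (rule CPL_mp[OF CPL_mp[OF CPL_cases CPL_deduction] CPL_deduction])
qed

theorem tautology_CPL_derivable:
  assumes "tautology f"
  shows "CPL_derivable G f"
  using tautology_CPL_derivable_from_literals[OF assms finite_prop_atoms order_refl]
  by (rule derivable_mono) auto

lemma derivable_tautology:
  assumes "tautology f" "\<And>x. CPL_ax x \<Longrightarrow> A x"
  shows "derivable A G f"
  using tautology_CPL_derivable[OF assms(1), of G] assms(2) by (rule derivable_mono) auto

lemma derivable_tautological_consequence:
  assumes "derivable A G p" "tautology (Imp p q)" "\<And>x. CPL_ax x \<Longrightarrow> A x"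
  shows "derivable A G q"
  using derivable_tautology[OF assms(2,3)] assms(1) by (rule derivable.mp)

lemma derivable_And:
  assumes "derivable A G p" "derivable A G q" "\<And>x. CPL_ax x \<Longrightarrow> A x"
  shows "derivable A G (And p q)"
proof -
  have "tautology (Imp p (Imp q (And p q)))"
    by (simp add: tautology_def And_def)
  then have "derivable A G (Imp p (Imp q (And p q)))"
    using assms(3) by (rule derivable_tautology)
  then show ?thesis
    by (rule derivable.mp[OF derivable.mp assms(2)]) (rule assms(1))
qed

abbreviation Km_axiom :: "fm \<Rightarrow> bool" where
  "Km_axiom \<equiv> \<lambda>f. CPL_ax f \<or> common_ax f \<or> Km_ax f"

abbreviation Kmc_axiom :: "fm \<Rightarrow> bool" where
  "Kmc_axiom \<equiv> \<lambda>f. CPL_ax f \<or> common_ax f \<or> Kmc_ax f"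

lemma common_ax_Km_derivable: "common_ax f \<Longrightarrow> derivable Km_axiom G f"
  and Km_ax_Km_derivable: "Km_ax f \<Longrightarrow> derivable Km_axiom G f"
  and common_ax_Kmc_derivable: "common_ax f \<Longrightarrow> derivable Kmc_axiom G f"
  and Kmc_ax_Kmc_derivable: "Kmc_ax f \<Longrightarrow> derivable Kmc_axiom G f"
  by (simp_all add: derivable.ax)

lemmas derived_connective_defs = Dia_def Or_def And_def Cons_def Incons_def

lemma Km_ax_Kmc_derivable: "Km_ax f \<Longrightarrow> derivable Kmc_axiom G f"
proof (induction rule: Km_ax.induct)
  case (K' a b)
  show ?case
    by (rule derivable_tautological_consequence[OF Kmc_ax.K''[of a b, THEN Kmc_ax_Kmc_derivable]])
      (auto simp: tautology_def derived_connective_defs)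
next
  case (K1' b a)
  show ?case
    by (rule derivable_tautological_consequence[OF derivable_And[OF
          Kmc_ax.K1''[of b a, THEN Kmc_ax_Kmc_derivable]
          common_ax.DN1[of b, THEN common_ax_Kmc_derivable]]])
      (auto simp: tautology_def derived_connective_defs)
next
  case (K2' a b)
  show ?case
    by (rule derivable_tautological_consequence[OF Kmc_ax.K2''[of a b, THEN Kmc_ax_Kmc_derivable]])
      (auto simp: tautology_def derived_connective_defs)
next
  case (M3' a b)
  show ?case
    by (rule derivable_tautological_consequence[OF derivable_And[OF
          Kmc_ax.M3''[of a b, THEN Kmc_ax_Kmc_derivable]
          common_ax.DN1[of a, THEN common_ax_Kmc_derivable]]])
      (auto simp: tautology_def derived_connective_defs)
next
  case (M4' b a)
  show ?case
    by (rule derivable_tautological_consequence[OF derivable_And[OF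
          Kmc_ax.M4''[of b a, THEN Kmc_ax_Kmc_derivable]
          common_ax.DN1[of b, THEN common_ax_Kmc_derivable]]])
      (auto simp: tautology_def derived_connective_defs)
next
  case (I1 a b)
  show ?case
    by (rule derivable_tautological_consequence[OF Kmc_ax.I1'[of a b, THEN Kmc_ax_Kmc_derivable]])
      (auto simp: tautology_def derived_connective_defs)
next
  case (I2 b a)
  show ?case
    by (rule derivable_tautological_consequence[OF Kmc_ax.I2'[of b a, THEN Kmc_ax_Kmc_derivable]])
      (auto simp: tautology_def derived_connective_defs)
qed

lemma Kmc_ax_Km_derivable: "Kmc_ax f \<Longrightarrow> derivable Km_axiom G f"
proof (induction rule: Kmc_ax.induct)
  case (K'' a b)
  show ?case
    by (rule derivable_tautological_consequence[OF Km_ax.K'[of a b, THEN Km_ax_Km_derivable]])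
      (auto simp: tautology_def derived_connective_defs)
next
  case (K1'' b a)
  show ?case
    by (rule derivable_tautological_consequence[OF derivable_And[OF
          Km_ax.K1'[of b a, THEN Km_ax_Km_derivable]
          common_ax.DN2[of b, THEN common_ax_Km_derivable]]])
      (auto simp: tautology_def derived_connective_defs)
next
  case (K2'' a b)
  show ?case
    by (rule derivable_tautological_consequence[OF Km_ax.K2'[of a b, THEN Km_ax_Km_derivable]])
      (auto simp: tautology_def derived_connective_defs)
next
  case (M3'' a b)
  show ?case
    by (rule derivable_tautological_consequence[OF derivable_And[OF
          Km_ax.M3'[of a b, THEN Km_ax_Km_derivable]
          common_ax.DN2[of a, THEN common_ax_Km_derivable]]])
      (auto simp: tautology_def derived_connective_defs)
next
  case (M4'' b a)
  show ?case
    by (rule derivable_tautological_consequence[OF derivable_And[OF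
          Km_ax.M4'[of b a, THEN Km_ax_Km_derivable] derivable_And[OF
          Km_ax.M3'[of a b, THEN Km_ax_Km_derivable]
          common_ax.DN2[of b, THEN common_ax_Km_derivable]]]])
      (auto simp: tautology_def derived_connective_defs)
next
  case (I1' a b)
  show ?case
    by (rule derivable_tautological_consequence[OF Km_ax.I1[of a b, THEN Km_ax_Km_derivable]])
      (auto simp: tautology_def derived_connective_defs)
next
  case (I2' b a)
  show ?case
    by (rule derivable_tautological_consequence[OF Km_ax.I2[of b a, THEN Km_ax_Km_derivable]])
      (auto simp: tautology_def derived_connective_defs)
qed

theorem mainTheorem10:
  fixes \<Gamma> :: "fm set" and \<alpha> :: fm
  shows "Km_derives \<Gamma> \<alpha> \<longleftrightarrow> Kmc_derives \<Gamma> \<alpha>"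
  unfolding Km_derives_def Kmc_derives_def
  by (rule derivable_eq_if_axioms_interderivable)
    (auto intro: derivable.ax Km_ax_Kmc_derivable Kmc_ax_Km_derivable)

end
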